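(* $\mathfrak C_R \not\subseteq \mathfrak m^2$ if and only if $a_n \ge c_R$.
   Context: Let $k$ be a field and let $(R,\mathfrak m)$ be a complete local noetherian domain of dimension $1$ containing $k$ with $R/\mathfrak m = k$, with normalization $\overline R$ having residue field $k$, so $\overline R = k[[t]]$ and $R \subseteq k[[t]]$ is finite birational. Let $v$ be the $t$-adic valuation. For $A \subseteq k((t))$ let $v(A) = \{v(f): f\in A\setminus\{0\}\}$. The conductor is $\mathfrak C_R = \{x \in \overline R : x\overline R \subseteq R\} = t^{c_R}\overline R$, where $c_R$ is the conductor degree. The Herzog–Kunz sequence of $R$ is $v(\mathfrak m)\setminus v(\mathfrak m^2)$ listed increasingly as $a_1 < \cdots < a_n$. *)

theory Defs
  imports "HOL-Computational_Algebra.Formal_Power_Series"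
begin

text \<open>Setting: R is a k-subalgebra of k[[t]] (t = fps_X) containing k, with nonzero
conductor (i.e. R \<subseteq> k[[t]] finite birational). Such R is automatically a complete
local noetherian domain of dimension 1 with residue field k and normalization k[[t]].\<close>

definition admissible_ring :: "'a::field fps set \<Rightarrow> bool" where
  "admissible_ring R \<longleftrightarrow>
     (\<forall>c. fps_const c \<in> R) \<and>
     (\<forall>f\<in>R. \<forall>g\<in>R. f + g \<in> R) \<and>
     (\<forall>f\<in>R. - f \<in> R) \<and>
     (\<forall>f\<in>R. \<forall>g\<in>R. f * g \<in> R) \<and>
     (\<exists>N. \<forall>g. fps_X ^ N * g \<in> R)"

definition max_ideal :: "'a::field fps set \<Rightarrow> 'a fps set" where
  "max_ideal R = {f \<in> R. fps_nth f 0 = 0}"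

definition ideal_prod :: "'a::field fps set \<Rightarrow> 'a fps set \<Rightarrow> 'a fps set" where
  "ideal_prod I J = {f. \<exists>(n::nat) a b. (\<forall>i<n. a i \<in> I \<and> b i \<in> J) \<and> f = (\<Sum>i<n. a i * b i)}"

definition vals :: "'a::field fps set \<Rightarrow> nat set" where
  "vals A = subdegree ` (A - {0})"

definition conductor :: "'a::field fps set \<Rightarrow> 'a fps set" where
  "conductor R = {x. \<forall>y. x * y \<in> R}"

text \<open>Conductor degree c_R: the conductor is t^{c_R} k[[t]].\<close>
definition conductor_degree :: "'a::field fps set \<Rightarrow> nat" where
  "conductor_degree R = (LEAST c. fps_X ^ c \<in> conductor R)"

definition HK_last :: "'a::field fps set \<Rightarrow> nat" where
  "HK_last R = Max (vals (max_ideal R) - vals (ideal_prod (max_ideal R) (max_ideal R)))"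

end

theory Submission
  imports Defs
begin

text \<open>Let \<open>e\<close> be the least value of \<open>m\<close>. All values of \<open>m\<^sup>2\<close> are at least \<open>2e\<close>, so \<open>e\<close> is a
Herzog-Kunz value; and \<open>f t\<^sup>c k[[t]] \<subseteq> m\<^sup>2\<close> for \<open>f \<in> m\<close> of value \<open>e\<close>, so all Herzog-Kunz values
are below \<open>e + c\<close> and \<open>a\<^sub>n\<close> is their maximum. If \<open>a\<^sub>n \<ge> c\<close>, then \<open>t\<^bsup>a\<^sub>n\<^esup>\<close> lies in the
conductor but not in \<open>m\<^sup>2\<close>. If \<open>a\<^sub>n < c\<close>, every \<open>j \<ge> c\<close> is a value of \<open>m\<close> (as \<open>t\<^sup>j \<in> m\<close>) but
not a Herzog-Kunz value, hence a value of \<open>m\<^sup>2\<close>. Since \<open>m\<^sup>2\<close> is a \<open>k\<close>-vector space containing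
\<open>t\<^bsup>e+c\<^esup> k[[t]]\<close>, cancelling leading terms successively in degrees \<open>c, \<dots>, e + c - 1\<close> shows
\<open>t\<^sup>c k[[t]] \<subseteq> m\<^sup>2\<close>.\<close>

unbundle fps_syntax

abbreviation max_ideal_sq :: "'a::field fps set \<Rightarrow> 'a fps set" where
  "max_ideal_sq R \<equiv> ideal_prod (max_ideal R) (max_ideal R)"

abbreviation HK_values :: "'a::field fps set \<Rightarrow> nat set" where
  "HK_values R \<equiv> vals (max_ideal R) - vals (max_ideal_sq R)"

lemma fps_X_power_dvd_iff_nth:
  fixes f :: "'a::field fps"
  shows "fps_X ^ n dvd f \<longleftrightarrow> (\<forall>i<n. f $ i = 0)"
proof
  assume "fps_X ^ n dvd f"
  then obtain g where "f = fps_X ^ n * g" by (elim dvdE)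
  then show "\<forall>i<n. f $ i = 0" by (simp add: fps_X_power_mult_nth)
next
  assume "\<forall>i<n. f $ i = 0"
  then have "f = 0 \<or> n \<le> subdegree f" by (auto intro: subdegree_geI)
  then have "f = fps_X ^ n * fps_shift n f" by (rule fps_conv_fps_X_power_mult_fps_shift)
  then show "fps_X ^ n dvd f" by (rule dvdI)
qed

lemma fps_X_power_dvd_iff_subdegree:
  fixes f :: "'a::field fps"
  shows "fps_X ^ n dvd f \<longleftrightarrow> f = 0 \<or> n \<le> subdegree f"
  by (cases "f = 0") (simp_all add: fps_dvd_iff fps_X_power_subdegree)

lemma in_valsI: "y \<in> A \<Longrightarrow> y \<noteq> 0 \<Longrightarrow> subdegree y \<in> vals A"
  unfolding vals_def by blast

lemma in_valsE:
  assumes "j \<in> vals A"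
  obtains y where "y \<in> A" and "y \<noteq> 0" and "subdegree y = j"
  using assms unfolding vals_def by auto

lemma fps_X_power_in_vals: "fps_X ^ j \<in> A \<Longrightarrow> j \<in> vals (A :: 'a::field fps set)"
  using in_valsI[of "fps_X ^ j" A] by (simp add: fps_X_power_subdegree)

lemma fps_X_power_Suc_dvd_cancel_leading:
  fixes y z :: "'a::field fps"
  assumes "y \<noteq> 0" and "fps_X ^ subdegree y dvd z"
  shows "fps_X ^ Suc (subdegree y) dvd z - fps_const (z $ subdegree y / y $ subdegree y) * y"
  unfolding fps_X_power_dvd_iff_nth
proof (intro allI impI)
  fix i assume "i < Suc (subdegree y)"
  then consider "i < subdegree y" | "i = subdegree y" by linarith
  then show "(z - fps_const (z $ subdegree y / y $ subdegree y) * y) $ i = 0"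
  proof cases
    case 1
    then show ?thesis using assms(2) by (auto simp: fps_X_power_dvd_iff_nth)
  qed (simp add: assms(1))
qed

lemma fps_subspace_contains_multiples:
  fixes V :: "'a::field fps set"
  assumes add: "\<And>x y. x \<in> V \<Longrightarrow> y \<in> V \<Longrightarrow> x + y \<in> V"
    and scale: "\<And>a x. x \<in> V \<Longrightarrow> fps_const a * x \<in> V"
    and orders: "\<And>j. c \<le> j \<Longrightarrow> j < N \<Longrightarrow> j \<in> vals V"
    and tail: "\<And>z. fps_X ^ N dvd z \<Longrightarrow> z \<in> V"
    and "c \<le> N"
  shows "fps_X ^ c dvd z \<Longrightarrow> z \<in> V"
  using \<open>c \<le> N\<close>
proof (induction c arbitrary: z rule: inc_induct)
  case base
  then show ?case by (rule tail)
next
  case (step j)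
  obtain y where y: "y \<in> V" "y \<noteq> 0" "subdegree y = j"
    using orders[OF step.hyps] by (rule in_valsE)
  define l where "l = z $ j / y $ j"
  have "fps_X ^ Suc j dvd z - fps_const l * y"
    using fps_X_power_Suc_dvd_cancel_leading[of y z] y step.prems unfolding l_def by simp
  then have "z - fps_const l * y \<in> V" by (rule step.IH)
  then have "(z - fps_const l * y) + fps_const l * y \<in> V" using y(1) by (intro add scale)
  then show ?case by simp
qed

lemma ideal_prod_memE:
  assumes "x \<in> ideal_prod I J"
  obtains n :: nat and a b where "\<forall>i<n. a i \<in> I \<and> b i \<in> J" and "x = (\<Sum>i<n. a i * b i)"
  using assms unfolding ideal_prod_def by blast

lemma ideal_prod_induct [consumes 1, case_names zero mult add]:
  assumes "x \<in> ideal_prod I J"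
    and "P 0"
    and "\<And>a b. a \<in> I \<Longrightarrow> b \<in> J \<Longrightarrow> P (a * b)"
    and "\<And>x y. P x \<Longrightarrow> P y \<Longrightarrow> P (x + y)"
  shows "P x"
proof -
  obtain n :: nat and a b where ab: "\<forall>i<n. a i \<in> I \<and> b i \<in> J" and x: "x = (\<Sum>i<n. a i * b i)"
    using assms(1) by (rule ideal_prod_memE)
  have "P (\<Sum>i<m. a i * b i)" if "m \<le> n" for m
    using that by (induction m) (simp_all add: assms(2-4) ab)
  then show ?thesis by (simp add: x)
qed

lemma ideal_prod_zero: "0 \<in> ideal_prod I J"
  unfolding ideal_prod_def by (rule CollectI, rule exI[of _ 0]) simp

lemma ideal_prod_add_mult:
  assumes "x \<in> ideal_prod I J" "a \<in> I" "b \<in> J"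
  shows "x + a * b \<in> ideal_prod I J"
proof -
  obtain n :: nat and a' b' where ab: "\<forall>i<n. a' i \<in> I \<and> b' i \<in> J" and x: "x = (\<Sum>i<n. a' i * b' i)"
    using assms(1) by (rule ideal_prod_memE)
  have "x + a * b = (\<Sum>i<Suc n. (a'(n := a)) i * (b'(n := b)) i)"
    by (simp add: x)
  moreover have "\<forall>i<Suc n. (a'(n := a)) i \<in> I \<and> (b'(n := b)) i \<in> J"
    using ab assms(2,3) by (simp add: less_Suc_eq)
  ultimately show ?thesis unfolding ideal_prod_def by blast
qed

lemma ideal_prod_add:
  assumes "x \<in> ideal_prod I J" and "y \<in> ideal_prod I J"
  shows "x + y \<in> ideal_prod I J"
  using assms(2,1)
proof (induction y arbitrary: x rule: ideal_prod_induct)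
  case (add y1 y2)
  then show ?case by (metis add.assoc)
qed (simp_all add: ideal_prod_add_mult)

lemma ideal_prod_mult: "a \<in> I \<Longrightarrow> b \<in> J \<Longrightarrow> a * b \<in> ideal_prod I J"
  using ideal_prod_add_mult[OF ideal_prod_zero] by simp

lemma ideal_prod_fps_const_mult:
  assumes "\<And>a. a \<in> I \<Longrightarrow> fps_const l * a \<in> I" and "x \<in> ideal_prod I J"
  shows "fps_const l * x \<in> ideal_prod I J"
  using assms(2)
proof (induction x rule: ideal_prod_induct)
  case (mult a b)
  then show ?case using assms(1) ideal_prod_mult by (metis mult.assoc)
qed (simp_all add: ideal_prod_zero ideal_prod_add distrib_left)

lemma ideal_prod_fps_X_power_dvd:
  fixes x :: "'a::field fps"
  assumes "\<And>a. a \<in> I \<Longrightarrow> fps_X ^ p dvd a" and "\<And>b. b \<in> J \<Longrightarrow> fps_X ^ q dvd b"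
    and "x \<in> ideal_prod I J"
  shows "fps_X ^ (p + q) dvd x"
  using assms(3)
  by (induction x rule: ideal_prod_induct) (simp_all add: assms(1,2) power_add mult_dvd_mono)

lemma fps_X_dvd_max_ideal: "a \<in> max_ideal R \<Longrightarrow> fps_X dvd a"
  using fps_X_power_dvd_iff_nth[of 1 a] unfolding max_ideal_def by simp

lemma one_notin_max_ideal_sq: "(1 :: 'a::field fps) \<notin> max_ideal_sq R"
proof
  assume "1 \<in> max_ideal_sq R"
  then have "fps_X ^ (1 + 1) dvd (1 :: 'a fps)"
    using fps_X_dvd_max_ideal by (intro ideal_prod_fps_X_power_dvd) auto
  then show False by (simp add: fps_X_power_dvd_iff_nth)
qed

lemma admissible_ringD:
  assumes "admissible_ring R"
  shows "fps_const c \<in> R" and "f \<in> R \<Longrightarrow> g \<in> R \<Longrightarrow> f * g \<in> R" and "\<exists>N. \<forall>g. fps_X ^ N * g \<in> R"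
  using assms unfolding admissible_ring_def by auto

context
  fixes R :: "'a::field fps set"
  assumes adm: "admissible_ring R"
begin

lemma conductor_eq: "conductor R = {x. fps_X ^ conductor_degree R dvd x}"
proof -
  let ?c = "conductor_degree R"
  obtain N where "\<forall>g. fps_X ^ N * g \<in> R" using admissible_ringD(3)[OF adm] by blast
  then have "fps_X ^ N \<in> conductor R" unfolding conductor_def by (simp add: mult.assoc)
  then have Xc: "fps_X ^ ?c \<in> conductor R" unfolding conductor_degree_def by (rule LeastI)
  have "x \<in> conductor R" if "fps_X ^ ?c dvd x" for x
    using that Xc unfolding conductor_def by (auto simp: mult.assoc elim!: dvdE)
  moreover have "fps_X ^ ?c dvd x" if x: "x \<in> conductor R" for x
  proof (cases "x = 0")
    case False
    then obtain k where "fps_X ^ subdegree x = x * k"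
      using subdegree_le_imp_dvd_left_divring[of x "fps_X ^ subdegree x"]
      by (auto simp: fps_X_power_subdegree)
    then have "fps_X ^ subdegree x \<in> conductor R" using x unfolding conductor_def by (simp add: mult.assoc)
    then have "?c \<le> subdegree x" unfolding conductor_degree_def by (rule Least_le)
    then show ?thesis by (simp add: fps_X_power_dvd_iff_subdegree)
  qed simp
  ultimately show ?thesis by blast
qed

lemma fps_X_power_in_max_ideal:
  assumes "0 < conductor_degree R" and "conductor_degree R \<le> j"
  shows "fps_X ^ j \<in> max_ideal R"
proof -
  have "fps_X ^ j \<in> conductor R" using assms(2) by (simp add: conductor_eq le_imp_power_dvd)
  then have "fps_X ^ j * 1 \<in> R" unfolding conductor_def by blast
  then show ?thesis unfolding max_ideal_def using assms by simp
qed

lemma max_ideal_fps_const_mult: "a \<in> max_ideal R \<Longrightarrow> fps_const l * a \<in> max_ideal R"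
  using admissible_ringD[OF adm] unfolding max_ideal_def by simp

lemma max_ideal_least_value:
  assumes "0 < conductor_degree R"
  obtains f where "f \<in> max_ideal R" and "f \<noteq> 0"
    and "\<And>a. a \<in> max_ideal R \<Longrightarrow> fps_X ^ subdegree f dvd a"
proof -
  define e where "e = (LEAST j. j \<in> vals (max_ideal R))"
  have "e \<in> vals (max_ideal R)"
    unfolding e_def by (rule LeastI, rule fps_X_power_in_vals, rule fps_X_power_in_max_ideal[OF assms order.refl])
  then obtain f where f: "f \<in> max_ideal R" "f \<noteq> 0" "subdegree f = e" by (rule in_valsE)
  have "fps_X ^ e dvd a" if a: "a \<in> max_ideal R" for a
  proof (cases "a = 0")
    case False
    with a have "subdegree a \<in> vals (max_ideal R)" by (rule in_valsI)
    then have "e \<le> subdegree a" unfolding e_def by (rule Least_le)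
    then show ?thesis by (simp add: fps_X_power_dvd_iff_subdegree)
  qed simp
  with f that show ?thesis by blast
qed

lemma max_ideal_sq_contains_multiples:
  assumes "0 < conductor_degree R" and "f \<in> max_ideal R" and "f \<noteq> 0"
    and "fps_X ^ (subdegree f + conductor_degree R) dvd z"
  shows "z \<in> max_ideal_sq R"
proof -
  let ?c = "conductor_degree R"
  have "f dvd fps_X ^ subdegree f"
    using fps_dvd_iff[of f "fps_X ^ subdegree f"] assms(3) by (simp add: fps_X_power_subdegree)
  then have "f * fps_X ^ ?c dvd fps_X ^ (subdegree f + ?c)" by (simp add: power_add mult_dvd_mono)
  then have "f * fps_X ^ ?c dvd z" using assms(4) by (rule dvd_trans)
  then obtain k where "z = f * fps_X ^ ?c * k" by (rule dvdE)
  then have z: "z = f * (fps_X ^ ?c * k)" by (simp add: mult.assoc)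
  have "fps_X ^ ?c * k \<in> conductor R" by (simp add: conductor_eq)
  then have "fps_X ^ ?c * k * 1 \<in> R" unfolding conductor_def by blast
  then have "fps_X ^ ?c * k \<in> max_ideal R"
    using assms(1) unfolding max_ideal_def by (simp add: fps_X_power_mult_nth)
  with assms(2) show ?thesis unfolding z by (rule ideal_prod_mult)
qed

lemma HK_values_finite_nonempty:
  assumes "0 < conductor_degree R"
  shows "finite (HK_values R)" and "HK_values R \<noteq> {}"
proof -
  let ?c = "conductor_degree R"
  obtain f where f: "f \<in> max_ideal R" "f \<noteq> 0" "\<And>a. a \<in> max_ideal R \<Longrightarrow> fps_X ^ subdegree f dvd a"
    using max_ideal_least_value[OF assms] by blast
  let ?e = "subdegree f"
  have "0 < ?e"
    using fps_X_dvd_max_ideal[OF f(1)] f(2) fps_X_power_dvd_iff_subdegree[of 1 f] by simp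
  have "?e \<notin> vals (max_ideal_sq R)"
  proof
    assume "?e \<in> vals (max_ideal_sq R)"
    then obtain y where y: "y \<in> max_ideal_sq R" "y \<noteq> 0" "subdegree y = ?e"
      by (rule in_valsE)
    have "fps_X ^ (?e + ?e) dvd y" using f(3) f(3) y(1) by (rule ideal_prod_fps_X_power_dvd)
    with y \<open>0 < ?e\<close> show False by (simp add: fps_X_power_dvd_iff_subdegree)
  qed
  moreover have "?e \<in> vals (max_ideal R)" using f(1,2) by (rule in_valsI)
  ultimately show "HK_values R \<noteq> {}" by blast
  have "HK_values R \<subseteq> {..<?e + ?c}"
  proof
    fix j assume j: "j \<in> HK_values R"
    then have "j \<in> vals (max_ideal R)" by blast
    then obtain z where z: "z \<in> max_ideal R" "z \<noteq> 0" "subdegree z = j" by (rule in_valsE)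
    show "j \<in> {..<?e + ?c}"
    proof (rule ccontr)
      assume "j \<notin> {..<?e + ?c}"
      then have "z \<in> max_ideal_sq R"
        using z by (intro max_ideal_sq_contains_multiples[OF assms f(1,2)])
          (simp add: fps_X_power_dvd_iff_subdegree)
      then have "subdegree z \<in> vals (max_ideal_sq R)" using z(2) by (rule in_valsI)
      with j z(3) show False by blast
    qed
  qed
  then show "finite (HK_values R)" by (rule finite_subset) simp
qed

lemma conductor_not_subset_max_ideal_sq:
  assumes "0 < conductor_degree R" and "conductor_degree R \<le> HK_last R"
  shows "\<not> conductor R \<subseteq> max_ideal_sq R"
proof
  have HK: "HK_last R \<in> HK_values R"
    unfolding HK_last_def using HK_values_finite_nonempty[OF assms(1)] by (rule Max_in)
  assume "conductor R \<subseteq> max_ideal_sq R"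
  moreover have "fps_X ^ HK_last R \<in> conductor R"
    using assms(2) by (simp add: conductor_eq le_imp_power_dvd)
  ultimately have "HK_last R \<in> vals (max_ideal_sq R)" by (intro fps_X_power_in_vals) blast
  with HK show False by blast
qed

lemma conductor_subset_max_ideal_sq:
  assumes "HK_last R < conductor_degree R"
  shows "conductor R \<subseteq> max_ideal_sq R"
proof -
  let ?c = "conductor_degree R"
  have "0 < ?c" using assms by simp
  obtain f where f: "f \<in> max_ideal R" "f \<noteq> 0"
    using max_ideal_least_value[OF \<open>0 < ?c\<close>] by blast
  have high_values: "j \<in> vals (max_ideal_sq R)" if "?c \<le> j" for j
  proof -
    have "j \<in> vals (max_ideal R)"
      using fps_X_power_in_max_ideal[OF \<open>0 < ?c\<close> that] by (rule fps_X_power_in_vals)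
    moreover have "j \<notin> HK_values R"
    proof
      assume "j \<in> HK_values R"
      then have "j \<le> HK_last R"
        unfolding HK_last_def by (rule Max_ge[OF HK_values_finite_nonempty(1)[OF \<open>0 < ?c\<close>]])
      with assms that show False by simp
    qed
    ultimately show ?thesis by blast
  qed
  have multiples: "z \<in> max_ideal_sq R" if "fps_X ^ ?c dvd z" for z
  proof (rule fps_subspace_contains_multiples[of "max_ideal_sq R" ?c "subdegree f + ?c"])
    show "fps_const l * x \<in> max_ideal_sq R" if "x \<in> max_ideal_sq R" for l x
      using max_ideal_fps_const_mult that by (rule ideal_prod_fps_const_mult)
    show "y \<in> max_ideal_sq R" if "fps_X ^ (subdegree f + ?c) dvd y" for y
      using \<open>0 < ?c\<close> f that by (rule max_ideal_sq_contains_multiples)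
    show "x + y \<in> max_ideal_sq R" if "x \<in> max_ideal_sq R" "y \<in> max_ideal_sq R" for x y
      using that by (rule ideal_prod_add)
    show "j \<in> vals (max_ideal_sq R)" if "?c \<le> j" "j < subdegree f + ?c" for j
      using that(1) by (rule high_values)
  qed (simp, fact that)
  then show ?thesis unfolding conductor_eq by blast
qed

end

theorem mainTheorem7:
  fixes R :: "'a::field fps set"
  assumes "admissible_ring R"
  shows "\<not> conductor R \<subseteq> ideal_prod (max_ideal R) (max_ideal R)
           \<longleftrightarrow> HK_last R \<ge> conductor_degree R"
proof (cases "conductor_degree R = 0")
  case True
  then have "1 \<in> conductor R" by (simp add: conductor_eq[OF assms])
  with True show ?thesis using one_notin_max_ideal_sq by auto
next
  case False
  then have "0 < conductor_degree R" by simp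
  show ?thesis
  proof (cases "conductor_degree R \<le> HK_last R")
    case True
    with conductor_not_subset_max_ideal_sq[OF assms \<open>0 < conductor_degree R\<close>] show ?thesis by simp
  next
    case False
    with conductor_subset_max_ideal_sq[OF assms] show ?thesis by simp
  qed
qed

end
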